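(* If $A\subset\mathbb{R}^d$ is a finite set in general position, then for all $K\in\mathbb{N}$, every simplicial complex in the bifiltration $\textnormal{S-Del}^{\le K}$ has dimension at most $2\binom{d+1}{\lfloor\frac{d+1}{2}\rfloor}$.
   Context: For $\tilde A\subseteq A$ let $\mathrm{Ball}_r(\tilde A)=\{b: \|b-\tilde a\|\le r\ \forall\tilde a\in\tilde A\}$ and for $|\tilde A|=k$ let $\mathrm{Vor}(\tilde A)=\{b\in\mathbb{R}^d: \|b-\tilde a\|\le\|b-a\|\ \forall\tilde a\in\tilde A, a\in A\setminus\tilde A\}$. Let $\mathrm{Del}^{+}_{r,k}$ be the abstract simplicial complex whose vertices are subsets $\tilde A\subseteq A$ with $|\tilde A|\in\{k,k+1\}$ and whose simplices are the sets $\sigma$ of such subsets with $\bigcap_{\tilde A\in\sigma}(\mathrm{Ball}_r(\tilde A)\cap\mathrm{Vor}(\tilde A))\neq\emptyset$. For $r\ge0$ and $k\in\mathbb{N}=\{1,2,\dots\}$, $\textnormal{S-Del}^{\le K}_{r,k}=\bigcup_{i=k}^{K-1}\mathrm{Del}^{+}_{r,i}$. *)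

theory Defs
  imports "HOL-Analysis.Analysis"
begin

text \<open>Points live in an abstract Euclidean space 'a with d = DIM('a).\<close>

definition Ball_r :: "real \<Rightarrow> 'a::euclidean_space set \<Rightarrow> 'a set" where
  "Ball_r r At = {b. \<forall>a\<in>At. norm (b - a) \<le> r}"

definition Vor :: "'a::euclidean_space set \<Rightarrow> 'a set \<Rightarrow> 'a set" where
  "Vor A At = {b. \<forall>t\<in>At. \<forall>a\<in>A - At. norm (b - t) \<le> norm (b - a)}"

definition del_vertices :: "'a set \<Rightarrow> nat \<Rightarrow> 'a set set" where
  "del_vertices A k = {At. At \<subseteq> A \<and> (card At = k \<or> card At = k + 1)}"

definition Del_plus :: "'a::euclidean_space set \<Rightarrow> real \<Rightarrow> nat \<Rightarrow> 'a set set set" where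
  "Del_plus A r k = {\<sigma>. \<sigma> \<subseteq> del_vertices A k \<and>
      (\<Inter>At\<in>\<sigma>. Ball_r r At \<inter> Vor A At) \<noteq> {}}"

definition S_Del :: "'a::euclidean_space set \<Rightarrow> nat \<Rightarrow> real \<Rightarrow> nat \<Rightarrow> 'a set set set" where
  "S_Del A K r k = (\<Union>i\<in>{k..<K}. Del_plus A r i)"

definition general_position :: "'a::euclidean_space set \<Rightarrow> bool" where
  "general_position A \<longleftrightarrow>
     (\<forall>S\<subseteq>A. card S \<le> DIM('a) + 1 \<longrightarrow> \<not> affine_dependent S) \<and>
     (\<forall>S\<subseteq>A. card S = DIM('a) + 2 \<longrightarrow> \<not> (\<exists>c \<rho>. \<forall>a\<in>S. dist a c = \<rho>))"

end

theory Submission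
  imports Defs
begin

text \<open>A simplex of \<open>Del\<^sup>+(r, i)\<close> has a point \<open>b\<close> common to the Voronoi cells of its vertices,
  which are sets of size \<open>i\<close> or \<open>i + 1\<close>; so it suffices to count, for fixed \<open>b\<close> and \<open>i\<close>, the
  sets \<open>X \<subseteq> A\<close> with \<open>|X| = i\<close> and \<open>b \<in> Vor(X)\<close>. Such an \<open>X\<close> is a set of \<open>i\<close> nearest neighbours of \<open>b\<close>:
  with \<open>R\<close> its largest distance from \<open>b\<close>, it lies between the points of \<open>A\<close> in the open and in
  the closed ball of radius \<open>R\<close>. Two such sets with radii \<open>R < R'\<close> would be nested, hence equal,
  so \<open>R\<close> depends only on \<open>i\<close>, and the sets differ only in which points of \<open>A\<close> on the sphere
  of radius \<open>R\<close> they contain. In general position that sphere carries at most \<open>d + 1\<close> points,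
  which leaves at most \<open>C(d+1, \<lfloor>(d+1)/2\<rfloor>)\<close> choices.\<close>

definition farthest_dist :: "'a::metric_space \<Rightarrow> 'a set \<Rightarrow> real" where
  "farthest_dist b X = Max (dist b ` X)"

lemma Vor_sandwich:
  fixes b :: "'a::euclidean_space"
  assumes "finite X" "X \<noteq> {}" "X \<subseteq> A" "b \<in> Vor A X"
  shows "A \<inter> ball b (farthest_dist b X) \<subseteq> X" and "X \<subseteq> A \<inter> cball b (farthest_dist b X)"
proof -
  have "farthest_dist b X \<in> dist b ` X"
    unfolding farthest_dist_def using assms(1,2) by (intro Max_in) auto
  then obtain z where z: "z \<in> X" "dist b z = farthest_dist b X"
    by auto
  show "A \<inter> ball b (farthest_dist b X) \<subseteq> X"
  proof
    fix a assume a: "a \<in> A \<inter> ball b (farthest_dist b X)"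
    show "a \<in> X"
    proof (rule ccontr)
      assume "a \<notin> X"
      then have "dist b z \<le> dist b a"
        using assms(4) a z(1) by (auto simp: Vor_def dist_norm)
      then show False using a z(2) by simp
    qed
  qed
  show "X \<subseteq> A \<inter> cball b (farthest_dist b X)"
    using assms(1,3) by (auto simp: farthest_dist_def)
qed

lemma Vor_farthest_dist_eq:
  fixes b :: "'a::euclidean_space"
  assumes "finite A" "X \<subseteq> A" "Y \<subseteq> A" "card X = card Y" "X \<noteq> {}"
    and "b \<in> Vor A X" "b \<in> Vor A Y"
  shows "farthest_dist b X = farthest_dist b Y"
proof -
  have cell: "finite U" "U \<noteq> {}" "U \<subseteq> A" "b \<in> Vor A U" "card U = card X"
    if "U \<in> {X, Y}" for U
  proof -
    show "U \<subseteq> A" "b \<in> Vor A U" "card U = card X"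
      using that assms(2-4,6,7) by auto
    then show "finite U"
      using finite_subset assms(1) by blast
    have "card X \<noteq> 0"
      using finite_subset[OF assms(2,1)] assms(5) by simp
    then show "U \<noteq> {}"
      using \<open>card U = card X\<close> by auto
  qed
  have eq_if_less: "U = V"
    if less: "farthest_dist b U < farthest_dist b V" and U: "U \<in> {X, Y}" and V: "V \<in> {X, Y}"
    for U V
  proof -
    have "U \<subseteq> A \<inter> cball b (farthest_dist b U)"
      using Vor_sandwich(2)[OF cell(1-4)[OF U]] .
    also have "\<dots> \<subseteq> A \<inter> ball b (farthest_dist b V)"
      using less by auto
    also have "\<dots> \<subseteq> V"
      using Vor_sandwich(1)[OF cell(1-4)[OF V]] .
    finally show "U = V"
      using card_subset_eq[OF cell(1)[OF V]] cell(5)[OF U] cell(5)[OF V] by simp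
  qed
  show ?thesis
    by (rule linorder_cases[of "farthest_dist b X" "farthest_dist b Y"])
      (use eq_if_less[of X Y] eq_if_less[of Y X] in auto)
qed

lemma card_sandwiched_sets_le:
  assumes "finite Q" "\<And>X. X \<in> F \<Longrightarrow> P \<subseteq> X \<and> X \<subseteq> Q \<and> card X = i"
  shows "card F \<le> card (Q - P) choose (i - card P)"
proof -
  let ?G = "{Y. Y \<subseteq> Q - P \<and> card Y = i - card P}"
  have inj: "inj_on (\<lambda>X. X - P) F"
  proof (rule inj_onI)
    fix X Y assume "X \<in> F" "Y \<in> F" "X - P = Y - P"
    then have "P \<union> (X - P) = P \<union> (Y - P)" "P \<subseteq> X" "P \<subseteq> Y"
      using assms(2) by auto
    then show "X = Y"
      by (simp add: Un_absorb1)
  qed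
  have image: "(\<lambda>X. X - P) ` F \<subseteq> ?G"
  proof (rule image_subsetI)
    fix X assume "X \<in> F"
    then have PX: "P \<subseteq> X" and "X \<subseteq> Q" "card X = i"
      using assms(2) by auto
    moreover have "finite P"
      using finite_subset[OF order_trans[OF PX \<open>X \<subseteq> Q\<close>] assms(1)] .
    ultimately show "X - P \<in> ?G"
      by (auto simp: card_Diff_subset)
  qed
  have "card F = card ((\<lambda>X. X - P) ` F)"
    using card_image[OF inj] by simp
  also have "\<dots> \<le> card ?G"
    using image assms(1) by (intro card_mono) simp_all
  also have "\<dots> = card (Q - P) choose (i - card P)"
    using assms(1) by (simp add: n_subsets)
  finally show ?thesis .
qed

lemma card_Vor_cells_containing_le:
  fixes A :: "'a::euclidean_space set"
  assumes "finite A" and sphere_le: "\<And>\<rho>. card (A \<inter> sphere b \<rho>) \<le> m"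
  shows "card {X. X \<subseteq> A \<and> card X = i \<and> b \<in> Vor A X} \<le> m choose (m div 2)"
    (is "card ?F \<le> _")
proof (cases "?F = {} \<or> i = 0")
  case True
  then have "?F \<subseteq> {{}}"
    using assms(1) finite_subset by fastforce
  then have "card ?F \<le> 1"
    using card_mono[of "{{}}" ?F] by simp
  then show ?thesis by (simp add: Suc_leI order_trans)
next
  case False
  then obtain X0 where X0: "X0 \<in> ?F" and "i \<noteq> 0" by auto
  define R where "R = farthest_dist b X0"
  have "X0 \<noteq> {}"
    using X0 \<open>i \<noteq> 0\<close> by auto
  have between: "A \<inter> ball b R \<subseteq> X \<and> X \<subseteq> A \<inter> cball b R \<and> card X = i" if "X \<in> ?F" for X
  proof -
    have "R = farthest_dist b X"
      unfolding R_def using X0 that \<open>X0 \<noteq> {}\<close>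
      by (intro Vor_farthest_dist_eq[OF assms(1)]) auto
    moreover have "finite X" "X \<noteq> {}"
      using that \<open>i \<noteq> 0\<close> assms(1) finite_subset by auto
    ultimately show ?thesis
      using Vor_sandwich[of X A b] that by auto
  qed
  have "card ?F \<le> card (A \<inter> cball b R - A \<inter> ball b R) choose (i - card (A \<inter> ball b R))"
    using assms(1) by (intro card_sandwiched_sets_le between) simp
  also have "\<dots> = card (A \<inter> sphere b R) choose (i - card (A \<inter> ball b R))"
    by (simp only: Diff_Int_distrib[symmetric] cball_diff_eq_sphere)
  also have "\<dots> \<le> m choose (i - card (A \<inter> ball b R))"
    by (rule binomial_right_mono[OF sphere_le])
  also have "\<dots> \<le> m choose (m div 2)"
    by (rule binomial_maximum)
  finally show ?thesis .
qed

lemma general_position_card_sphere_le: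
  fixes A :: "'a::euclidean_space set"
  assumes "general_position A"
  shows "card (A \<inter> sphere c \<rho>) \<le> DIM('a) + 1"
proof (rule ccontr)
  assume "\<not> ?thesis"
  then obtain S where S: "S \<subseteq> A" "S \<subseteq> sphere c \<rho>" "card S = DIM('a) + 2"
    using obtain_subset_with_card_n[of "DIM('a) + 2" "A \<inter> sphere c \<rho>"] by force
  then have "\<forall>a\<in>S. dist a c = \<rho>"
    by (auto simp: dist_commute)
  moreover have "\<not> (\<exists>c \<rho>. \<forall>a\<in>S. dist a c = \<rho>)"
    using assms S(1,3) unfolding general_position_def by simp
  ultimately show False by blast
qed

theorem lemma14:
  fixes A :: "'a::euclidean_space set"
  assumes "finite A" and "general_position A"
  shows "\<forall>K::nat. K \<ge> 1 \<longrightarrow> (\<forall>r::real. r \<ge> 0 \<longrightarrow> (\<forall>k::nat. k \<ge> 1 \<longrightarrow>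
           (\<forall>\<sigma>\<in>S_Del A K r k.
              card \<sigma> \<le> 2 * (DIM('a) + 1 choose ((DIM('a) + 1) div 2)) + 1)))"
proof (intro allI impI ballI)
  fix K r k \<sigma>
  assume "\<sigma> \<in> S_Del A K r k"
  then obtain i where "\<sigma> \<in> Del_plus A r i"
    unfolding S_Del_def by blast
  then obtain b where \<sigma>: "\<sigma> \<subseteq> del_vertices A i" "\<forall>X\<in>\<sigma>. b \<in> Vor A X"
    unfolding Del_plus_def by blast
  let ?F = "\<lambda>i. {X. X \<subseteq> A \<and> card X = i \<and> b \<in> Vor A X}"
  let ?C = "DIM('a) + 1 choose ((DIM('a) + 1) div 2)"
  have F_le: "card (?F j) \<le> ?C" for j
    using card_Vor_cells_containing_le[OF assms(1) general_position_card_sphere_le[OF assms(2)]] .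
  have "card \<sigma> \<le> card (?F i \<union> ?F (i + 1))"
    using \<sigma> assms(1) by (intro card_mono) (auto simp: del_vertices_def)
  also have "\<dots> \<le> card (?F i) + card (?F (i + 1))"
    by (rule card_Un_le)
  also have "\<dots> \<le> 2 * ?C"
    using F_le[of i] F_le[of "i + 1"] by linarith
  finally show "card \<sigma> \<le> 2 * ?C + 1" by simp
qed

end
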